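(* Let $\alpha\in\mathbb{N}$, $\beta>\frac{3}{2\alpha}$, let $f\in C(\mathbb{R})$ with $f\in L_1(\mathbb{R})$, and let $\xi>0$. Then $$\|M_\xi f-f\|_1\le\left[\frac12+\frac{\Gamma(\frac1\alpha)\Gamma(\beta-\frac1\alpha)}{\Gamma(\frac{1}{2\alpha})\Gamma(\beta-\frac{1}{2\alpha})}+\frac{\Gamma(\frac{3}{2\alpha})\Gamma(\beta-\frac{3}{2\alpha})}{2\Gamma(\frac{1}{2\alpha})\Gamma(\beta-\frac{1}{2\alpha})}\right]\omega_2(f,\xi)_1.$$ Hence $M_\xi\to I$ (the unit operator) in the $L_1$ norm as $\xi\to0$.
   Context: For $\alpha\in\mathbb{N}$, $\beta>\frac{1}{2\alpha}$, $\xi>0$, let $W=\frac{\Gamma(\beta)\alpha\xi^{2\alpha\beta-1}}{\Gamma(\frac{1}{2\alpha})\Gamma(\beta-\frac{1}{2\alpha})}$ and define $M_\xi(f;x)=W\int_{-\infty}^{\infty}f(x+y)\frac{1}{(y^{2\alpha}+\xi^{2\alpha})^{\beta}}dy$, $x\in\mathbb{R}$. For $g\in L_1(\mathbb{R})$, $\Delta_t^2g(x)=g(x+2t)-2g(x+t)+g(x)$ and $\omega_2(g,h)_1=\sup_{|t|\le h}\|\Delta_t^2g(x)\|_{1,x}$, $h>0$. *)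

theory Defs
  imports "HOL-Analysis.Analysis"
begin

definition W_const :: "nat \<Rightarrow> real \<Rightarrow> real \<Rightarrow> real" where
  "W_const \<alpha> \<beta> \<xi> =
     Gamma \<beta> * real \<alpha> * \<xi> powr (2 * real \<alpha> * \<beta> - 1)
     / (Gamma (1 / (2 * real \<alpha>)) * Gamma (\<beta> - 1 / (2 * real \<alpha>)))"

definition M_op :: "nat \<Rightarrow> real \<Rightarrow> real \<Rightarrow> (real \<Rightarrow> real) \<Rightarrow> real \<Rightarrow> real" where
  "M_op \<alpha> \<beta> \<xi> f x =
     W_const \<alpha> \<beta> \<xi> * (LINT y|lborel. f (x + y) / (y ^ (2 * \<alpha>) + \<xi> ^ (2 * \<alpha>)) powr \<beta>)"

text \<open>L1 norm (as an extended nonnegative real, so it is honest also for non-integrable g).\<close>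
definition L1norm :: "(real \<Rightarrow> real) \<Rightarrow> ennreal" where
  "L1norm g = (\<integral>\<^sup>+ x. ennreal \<bar>g x\<bar> \<partial>lborel)"

definition delta2 :: "real \<Rightarrow> (real \<Rightarrow> real) \<Rightarrow> real \<Rightarrow> real" where
  "delta2 t g x = g (x + 2 * t) - 2 * g (x + t) + g x"

definition omega2 :: "(real \<Rightarrow> real) \<Rightarrow> real \<Rightarrow> ennreal" where
  "omega2 g h = (SUP t\<in>{t. \<bar>t\<bar> \<le> h}. L1norm (delta2 t g))"

end

theory Submission
  imports Defs
begin

text \<open>The kernel \<open>k(y) = W (y\<^sup>2\<^sup>\<alpha> + \<xi>\<^sup>2\<^sup>\<alpha>)\<^sup>-\<^sup>\<beta>\<close> of \<open>M\<^sub>\<xi>\<close> is even and has total mass 1,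
  so \<open>M\<^sub>\<xi> f(x) - f(x) = 1/2 \<integral> \<Delta>\<^sup>2\<^sub>y f(x - y) k(y) dy\<close> and, by Tonelli,
  \<open>\<parallel>M\<^sub>\<xi> f - f\<parallel>\<^sub>1 \<le> 1/2 \<integral> k(y) \<parallel>\<Delta>\<^sup>2\<^sub>y f\<parallel>\<^sub>1 dy\<close>. Splitting a step \<open>y\<close> into
  \<open>m \<le> 1 + |y|/\<xi>\<close> steps of length at most \<open>\<xi>\<close> gives \<open>\<parallel>\<Delta>\<^sup>2\<^sub>y f\<parallel>\<^sub>1 \<le> (1 + |y|/\<xi>)\<^sup>2 \<omega>\<^sub>2(f,\<xi>)\<^sub>1\<close>,
  and the moments \<open>\<integral> |y|\<^sup>j k(y) dy\<close>, \<open>j \<le> 2\<close>, are Beta integrals, which yields the constant.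
  Since translation is continuous in \<open>L\<^sub>1\<close>, \<open>\<omega>\<^sub>2(f,\<xi>)\<^sub>1 \<rightarrow> 0\<close> as \<open>\<xi> \<rightarrow> 0\<close>.\<close>

section \<open>Gamma and Beta integrals\<close>

lemma nn_integral_Gamma_scaled:
  fixes A s :: real
  assumes A: "A > 0" and s: "s > 0"
  shows "(\<integral>\<^sup>+t. ennreal (indicator {0..} t * t powr (s - 1) / exp (A * t)) \<partial>lborel)
         = ennreal (Gamma s / A powr s)"
proof -
  let ?X = "\<integral>\<^sup>+t. ennreal (indicator {0..} t * t powr (s - 1) / exp (A * t)) \<partial>lborel"
  have "ennreal (Gamma s) = (\<integral>\<^sup>+u. ennreal (indicator {0..} u * u powr (s - 1) / exp u) \<partial>lborel)"
    using s by (simp add: Gamma_conv_nn_integral_real)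
  also have "\<dots> = ennreal A * (\<integral>\<^sup>+t. ennreal (indicator {0..} (0 + A * t) * (0 + A * t) powr (s - 1)
                                        / exp (0 + A * t)) \<partial>lborel)"
    using A by (subst nn_integral_real_affine[where c=A and t=0]) auto
  also have "(\<integral>\<^sup>+t. ennreal (indicator {0..} (0 + A * t) * (0 + A * t) powr (s - 1) / exp (0 + A * t)) \<partial>lborel)
       = (\<integral>\<^sup>+t. ennreal (A powr (s - 1)) * ennreal (indicator {0..} t * t powr (s - 1) / exp (A * t)) \<partial>lborel)"
    using A by (intro nn_integral_cong)
      (auto simp: indicator_def ennreal_mult'[symmetric] powr_mult zero_le_mult_iff)
  also have "\<dots> = ennreal (A powr (s - 1)) * ?X"
    by (subst nn_integral_cmult) auto
  finally have eq: "ennreal (Gamma s) = ennreal (A powr s) * ?X"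
    using A by (simp add: ennreal_mult'[symmetric] mult.assoc[symmetric] powr_diff)
  have "?X = ennreal (1 / A powr s) * (ennreal (A powr s) * ?X)"
    using A by (simp add: mult.assoc[symmetric] ennreal_mult'[symmetric])
  also have "\<dots> = ennreal (Gamma s / A powr s)"
    using A s by (simp add: eq[symmetric] ennreal_mult'[symmetric] Gamma_real_pos less_imp_le)
  finally show ?thesis .
qed

text \<open>Write \<open>(v + c) powr (- b)\<close> as a Gamma integral in a second variable and exchange the order
  of integration.\<close>
lemma nn_integral_Beta_second_kind:
  fixes a b c :: real
  assumes a: "a > 0" and ab: "a < b" and c: "c > 0"
  shows "(\<integral>\<^sup>+v. ennreal (indicator {0..} v * v powr (a - 1) * (v + c) powr (- b)) \<partial>lborel)
         = ennreal (Gamma a * Gamma (b - a) * c powr (a - b) / Gamma b)"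
proof -
  have Gb: "Gamma b > 0" using a ab by (simp add: Gamma_real_pos)
  have Ga: "Gamma a > 0" using a by (simp add: Gamma_real_pos)
  define F where "F v t = ennreal (indicator {0..} v * v powr (a - 1) * indicator {0..} t * t powr (b - 1)
        / exp ((v + c) * t) / Gamma b)" for v t
  have [measurable]: "case_prod F \<in> borel_measurable (lborel \<Otimes>\<^sub>M lborel)"
    unfolding F_def by measurable
  have inner_t: "(\<integral>\<^sup>+t. F v t \<partial>lborel) = ennreal (indicator {0..} v * v powr (a - 1) * (v + c) powr (- b))"
    for v
  proof (cases "v \<ge> 0")
    case True
    have "(\<integral>\<^sup>+t. F v t \<partial>lborel) = (\<integral>\<^sup>+t. ennreal (v powr (a - 1) / Gamma b) *
         ennreal (indicator {0..} t * t powr (b - 1) / exp ((v + c) * t)) \<partial>lborel)"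
      using True Gb unfolding F_def
      by (intro nn_integral_cong) (auto simp: ennreal_mult'[symmetric] indicator_def)
    also have "\<dots> = ennreal (v powr (a - 1) / Gamma b) * ennreal (Gamma b / (v + c) powr b)"
      using True c a ab by (subst nn_integral_cmult) (auto simp: nn_integral_Gamma_scaled)
    finally show ?thesis
      using True c Gb by (simp add: ennreal_mult'[symmetric] powr_minus_divide)
  qed (simp add: F_def)
  have inner_v: "(\<integral>\<^sup>+v. F v t \<partial>lborel)
      = ennreal (Gamma a / Gamma b) * ennreal (indicator {0..} t * t powr (b - a - 1) / exp (c * t))"
    if "t \<noteq> 0" for t
  proof (cases "t > 0")
    case True
    have exp_split: "exp ((v + c) * t) = exp (t * v) * exp (c * t)" for v
      by (simp add: ring_distribs exp_add mult.commute)
    have "(\<integral>\<^sup>+v. F v t \<partial>lborel) = (\<integral>\<^sup>+v. ennreal (t powr (b - 1) / exp (c * t) / Gamma b) *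
         ennreal (indicator {0..} v * v powr (a - 1) / exp (t * v)) \<partial>lborel)"
      using True Gb unfolding F_def exp_split
      by (intro nn_integral_cong) (auto simp: ennreal_mult'[symmetric] indicator_def mult_ac)
    also have "\<dots> = ennreal (t powr (b - 1) / exp (c * t) / Gamma b) * ennreal (Gamma a / t powr a)"
      using True a by (subst nn_integral_cmult) (auto simp: nn_integral_Gamma_scaled)
    also have "\<dots> = ennreal (Gamma a / Gamma b * (t powr (b - a - 1) / exp (c * t)))"
    proof -
      have "t powr (b - 1) / exp (c * t) / Gamma b * (Gamma a / t powr a)
          = Gamma a / Gamma b * (t powr (b - a - 1) / exp (c * t))"
        using True by (simp add: powr_diff powr_add field_simps)
      then show ?thesis using Gb by (subst ennreal_mult'[symmetric]) auto
    qed
    also have "\<dots> = ennreal (Gamma a / Gamma b) * ennreal (t powr (b - a - 1) / exp (c * t))"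
      using Ga Gb by (intro ennreal_mult') simp
    finally show ?thesis using True by simp
  qed (use that in \<open>simp add: F_def indicator_def\<close>)
  have "(\<integral>\<^sup>+v. ennreal (indicator {0..} v * v powr (a - 1) * (v + c) powr (- b)) \<partial>lborel)
       = (\<integral>\<^sup>+v. \<integral>\<^sup>+t. F v t \<partial>lborel \<partial>lborel)"
    by (simp add: inner_t)
  also have "\<dots> = (\<integral>\<^sup>+t. \<integral>\<^sup>+v. F v t \<partial>lborel \<partial>lborel)"
    by (rule lborel_pair.Fubini'[symmetric]) measurable
  also have "\<dots> = (\<integral>\<^sup>+t. ennreal (Gamma a / Gamma b)
                        * ennreal (indicator {0..} t * t powr (b - a - 1) / exp (c * t)) \<partial>lborel)"
    by (intro nn_integral_cong_AE eventually_mono[OF AE_lborel_singleton[of 0]] inner_v)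
  also have "\<dots> = ennreal (Gamma a / Gamma b) * ennreal (Gamma (b - a) / c powr (b - a))"
    using c ab by (subst nn_integral_cmult) (auto simp: nn_integral_Gamma_scaled)
  also have "\<dots> = ennreal (Gamma a * Gamma (b - a) * c powr (a - b) / Gamma b)"
    using c Ga Gb by (subst ennreal_mult'[symmetric]) (auto simp: powr_diff field_simps)
  finally show ?thesis .
qed

lemma nn_integral_halfline_eq_SUP:
  fixes H :: "real \<Rightarrow> real" and h :: "nat \<Rightarrow> real"
  assumes [measurable]: "H \<in> borel_measurable borel"
    and inc: "incseq h" and lim: "filterlim h at_top sequentially"
  shows "(SUP i. \<integral>\<^sup>+x. ennreal (H x * indicator {0..h i} x) \<partial>lborel)
       = (\<integral>\<^sup>+x. ennreal (H x * indicator {0..} x) \<partial>lborel)"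
proof -
  have "incseq (\<lambda>i x. ennreal (H x * indicator {0..h i} x))"
  proof (intro incseq_SucI le_funI)
    fix i x
    have "h i \<le> h (Suc i)" using inc by (simp add: incseq_SucD)
    then show "ennreal (H x * indicator {0..h i} x) \<le> ennreal (H x * indicator {0..h (Suc i)} x)"
      by (auto simp: indicator_def)
  qed
  then have "(SUP i. \<integral>\<^sup>+x. ennreal (H x * indicator {0..h i} x) \<partial>lborel)
      = (\<integral>\<^sup>+x. (SUP i. ennreal (H x * indicator {0..h i} x)) \<partial>lborel)"
    by (intro nn_integral_monotone_convergence_SUP[symmetric]) measurable
  also have "\<dots> = (\<integral>\<^sup>+x. ennreal (H x * indicator {0..} x) \<partial>lborel)"
  proof (intro nn_integral_cong)
    fix x :: real
    show "(SUP i. ennreal (H x * indicator {0..h i} x)) = ennreal (H x * indicator {0..} x)"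
    proof (cases "x \<ge> 0")
      case True
      obtain i0 where i0: "h i0 \<ge> x"
        using lim by (auto simp: filterlim_at_top eventually_sequentially)
      show ?thesis
      proof (rule antisym)
        show "(SUP i. ennreal (H x * indicator {0..h i} x)) \<le> ennreal (H x * indicator {0..} x)"
          using True by (intro SUP_least) (auto simp: indicator_def)
        have "ennreal (H x * indicator {0..} x) = ennreal (H x * indicator {0..h i0} x)"
          using True i0 by (simp add: indicator_def)
        also have "\<dots> \<le> (SUP i. ennreal (H x * indicator {0..h i} x))"
          by (rule SUP_upper) simp
        finally show "ennreal (H x * indicator {0..} x) \<le> (SUP i. ennreal (H x * indicator {0..h i} x))" .
      qed
    qed (simp add: indicator_def)
  qed
  finally show ?thesis .
qed

lemma nn_integral_substitution_power:
  fixes G :: "real \<Rightarrow> real" and n :: nat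
  assumes n: "n \<ge> 1" and [measurable]: "G \<in> borel_measurable borel"
  shows "(\<integral>\<^sup>+y. ennreal (G (y ^ n) * (real n * y ^ (n - 1)) * indicator {0..} y) \<partial>lborel)
       = (\<integral>\<^sup>+v. ennreal (G v * indicator {0..} v) \<partial>lborel)"
proof -
  have bounded: "(\<integral>\<^sup>+x. ennreal (G x * indicator {0..real m ^ n} x) \<partial>lborel)
      = (\<integral>\<^sup>+x. ennreal (G (x ^ n) * (real n * x ^ (n - 1)) * indicator {0..real m} x) \<partial>lborel)"
    for m :: nat
  proof -
    have "(\<integral>\<^sup>+x. ennreal (G x * indicator {(\<lambda>y. y ^ n) 0..(\<lambda>y. y ^ n) (real m)} x) \<partial>lborel)
      = (\<integral>\<^sup>+x. ennreal (G ((\<lambda>y. y ^ n) x) * (\<lambda>y. real n * y ^ (n - 1)) x * indicator {0..real m} x) \<partial>lborel)"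
    proof (rule nn_integral_substitution)
      show "set_borel_measurable borel {0 ^ n..real m ^ n} G"
        unfolding set_borel_measurable_def by measurable
      show "((\<lambda>y. y ^ n) has_real_derivative real n * x ^ (n - 1)) (at x)" for x
        by (rule derivative_eq_intros refl | simp)+
    qed (auto intro!: continuous_intros)
    then show ?thesis using n by (simp add: power_0_left)
  qed
  have "(\<integral>\<^sup>+v. ennreal (G v * indicator {0..} v) \<partial>lborel)
      = (SUP m. \<integral>\<^sup>+x. ennreal (G x * indicator {0..real m ^ n} x) \<partial>lborel)"
    using n by (intro nn_integral_halfline_eq_SUP[symmetric] incseq_SucI power_mono
                  filterlim_pow_at_top filterlim_real_sequentially) auto
  also have "\<dots> = (SUP m. \<integral>\<^sup>+x. ennreal (G (x ^ n) * (real n * x ^ (n - 1)) * indicator {0..real m} x) \<partial>lborel)"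
    by (simp add: bounded)
  also have "\<dots> = (\<integral>\<^sup>+y. ennreal (G (y ^ n) * (real n * y ^ (n - 1)) * indicator {0..} y) \<partial>lborel)"
    by (intro nn_integral_halfline_eq_SUP incseq_SucI filterlim_real_sequentially) auto
  finally show ?thesis ..
qed

lemma nn_integral_moment_halfline:
  fixes n k :: nat and b c :: real
  assumes n: "n \<ge> 1" and c: "c > 0" and b: "real (k + 1) / real n < b"
  shows "(\<integral>\<^sup>+y. ennreal (indicator {0..} y * y ^ k * (y ^ n + c) powr (- b)) \<partial>lborel)
       = ennreal (Gamma (real (k + 1) / real n) * Gamma (b - real (k + 1) / real n)
                  * c powr (real (k + 1) / real n - b) / Gamma b / real n)"
proof -
  define a where "a = real (k + 1) / real n"
  have a: "a > 0" using n by (simp add: a_def)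
  define G where "G v = v powr (a - 1) * (v + c) powr (- b) / real n" for v
  have [measurable]: "G \<in> borel_measurable borel" unfolding G_def by measurable
  have power_identity: "(y ^ n) powr (a - 1) * y ^ (n - 1) = y ^ k" if "y > 0" for y :: real
  proof -
    have "(y ^ n) powr (a - 1) * y ^ (n - 1) = y powr (real n * (a - 1) + (real n - 1))"
      using that n by (simp add: powr_realpow[symmetric] powr_powr powr_add of_nat_diff)
    also have "real n * (a - 1) + (real n - 1) = real k"
      using n by (simp add: a_def field_simps)
    finally show ?thesis using that by (simp add: powr_realpow)
  qed
  have "(\<integral>\<^sup>+y. ennreal (indicator {0..} y * y ^ k * (y ^ n + c) powr (- b)) \<partial>lborel)
      = (\<integral>\<^sup>+y. ennreal (G (y ^ n) * (real n * y ^ (n - 1)) * indicator {0..} y) \<partial>lborel)"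
  proof (intro nn_integral_cong_AE eventually_mono[OF AE_lborel_singleton[of 0]])
    fix y :: real assume "y \<noteq> 0"
    then consider "y > 0" | "y < 0" by linarith
    then show "ennreal (indicator {0..} y * y ^ k * (y ^ n + c) powr (- b))
        = ennreal (G (y ^ n) * (real n * y ^ (n - 1)) * indicator {0..} y)"
    proof cases
      case 1
      then show ?thesis using n power_identity[OF 1] unfolding G_def by (simp add: field_simps)
    qed (simp add: indicator_def)
  qed
  also have "\<dots> = (\<integral>\<^sup>+v. ennreal (G v * indicator {0..} v) \<partial>lborel)"
    using n by (rule nn_integral_substitution_power) measurable
  also have "\<dots> = (\<integral>\<^sup>+v. ennreal (1 / real n)
                   * ennreal (indicator {0..} v * v powr (a - 1) * (v + c) powr (- b)) \<partial>lborel)"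
    unfolding G_def by (intro nn_integral_cong) (auto simp: ennreal_mult'[symmetric] indicator_def)
  also have "\<dots> = ennreal (1 / real n) * ennreal (Gamma a * Gamma (b - a) * c powr (a - b) / Gamma b)"
    using a b c by (subst nn_integral_cmult) (auto simp: nn_integral_Beta_second_kind a_def)
  also have "\<dots> = ennreal (Gamma a * Gamma (b - a) * c powr (a - b) / Gamma b / real n)"
    by (subst ennreal_mult'[symmetric]) (auto simp: field_simps)
  finally show ?thesis unfolding a_def .
qed

lemma nn_integral_even:
  fixes H :: "real \<Rightarrow> real"
  assumes [measurable]: "H \<in> borel_measurable borel"
  shows "(\<integral>\<^sup>+y. ennreal (H \<bar>y\<bar>) \<partial>lborel) = 2 * (\<integral>\<^sup>+y. ennreal (indicator {0..} y * H y) \<partial>lborel)"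
proof -
  have "(\<integral>\<^sup>+y. ennreal (H \<bar>y\<bar>) \<partial>lborel)
      = (\<integral>\<^sup>+y. ennreal (indicator {0..} y * H y) + ennreal (indicator {..<0} y * H \<bar>y\<bar>) \<partial>lborel)"
    by (intro nn_integral_cong) (auto simp: indicator_def)
  also have "\<dots> = (\<integral>\<^sup>+y. ennreal (indicator {0..} y * H y) \<partial>lborel)
                 + (\<integral>\<^sup>+y. ennreal (indicator {..<0} y * H \<bar>y\<bar>) \<partial>lborel)"
    by (rule nn_integral_add) auto
  also have "(\<integral>\<^sup>+y. ennreal (indicator {..<0} y * H \<bar>y\<bar>) \<partial>lborel)
       = ennreal \<bar>-1::real\<bar> * (\<integral>\<^sup>+y. ennreal (indicator {..<0} (0 + -1 * y) * H \<bar>0 + -1 * y\<bar>) \<partial>lborel)"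
    by (rule nn_integral_real_affine) auto
  also have "\<dots> = (\<integral>\<^sup>+y. ennreal (indicator {0..} y * H y) \<partial>lborel)"
    by (simp, intro nn_integral_cong_AE eventually_mono[OF AE_lborel_singleton[of 0]])
      (auto simp: indicator_def)
  finally show ?thesis by (simp add: mult_2)
qed

lemma nn_integral_moment_even_power:
  fixes n k :: nat and b c :: real
  assumes n: "n \<ge> 1" and "even n" and c: "c > 0" and b: "real (k + 1) / real n < b"
  shows "(\<integral>\<^sup>+y. ennreal (\<bar>y\<bar> ^ k * (y ^ n + c) powr (- b)) \<partial>lborel)
       = ennreal (2 * Gamma (real (k + 1) / real n) * Gamma (b - real (k + 1) / real n)
                  * c powr (real (k + 1) / real n - b) / Gamma b / real n)"
proof -
  have "(\<integral>\<^sup>+y. ennreal (\<bar>y\<bar> ^ k * (y ^ n + c) powr (- b)) \<partial>lborel)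
     = (\<integral>\<^sup>+y. ennreal ((\<lambda>u. u ^ k * (u ^ n + c) powr (- b)) \<bar>y\<bar>) \<partial>lborel)"
    using \<open>even n\<close> by (simp add: power_even_abs)
  also have "\<dots> = 2 * (\<integral>\<^sup>+y. ennreal (indicator {0..} y * y ^ k * (y ^ n + c) powr (- b)) \<partial>lborel)"
    by (subst nn_integral_even) (auto simp: mult.assoc)
  also have "\<dots> = 2 * ennreal (Gamma (real (k + 1) / real n) * Gamma (b - real (k + 1) / real n)
                  * c powr (real (k + 1) / real n - b) / Gamma b / real n)"
    by (subst nn_integral_moment_halfline[OF n c b]) (rule refl)
  also have "\<dots> = ennreal (2 * (Gamma (real (k + 1) / real n) * Gamma (b - real (k + 1) / real n)
                  * c powr (real (k + 1) / real n - b) / Gamma b / real n))"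
    by (subst ennreal_mult') simp_all
  finally show ?thesis by (simp add: mult.assoc)
qed

section \<open>Second differences\<close>

lemma L1norm_translate:
  fixes d :: "real \<Rightarrow> real"
  assumes [measurable]: "d \<in> borel_measurable borel"
  shows "(\<integral>\<^sup>+x. ennreal \<bar>d (x + s)\<bar> \<partial>lborel) = L1norm d"
proof -
  have "L1norm d = ennreal \<bar>1::real\<bar> * (\<integral>\<^sup>+x. ennreal \<bar>d (s + 1 * x)\<bar> \<partial>lborel)"
    unfolding L1norm_def by (rule nn_integral_real_affine) auto
  then show ?thesis by (simp add: add.commute)
qed

lemma delta2_measurable [measurable]:
  assumes [measurable]: "g \<in> borel_measurable borel"
  shows "delta2 t g \<in> borel_measurable borel"
  unfolding delta2_def by measurable

lemma diff_eq_sum_steps: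
  fixes g :: "real \<Rightarrow> real"
  shows "g (x + real m * t) - g x = (\<Sum>i<m. g (x + real i * t + t) - g (x + real i * t))"
  by (induction m) (auto simp: algebra_simps)

lemma delta2_dilate:
  fixes g :: "real \<Rightarrow> real"
  shows "delta2 (real m * t) g x = (\<Sum>i<m. \<Sum>j<m. delta2 t g (x + real (i + j) * t))"
proof -
  define e where "e y = g (y + real m * t) - g y" for y
  have e: "e y = (\<Sum>j<m. g (y + real j * t + t) - g (y + real j * t))" for y
    unfolding e_def by (rule diff_eq_sum_steps)
  have "delta2 (real m * t) g x = e (x + real m * t) - e x"
    unfolding e_def delta2_def by (simp add: algebra_simps)
  also have "\<dots> = (\<Sum>i<m. e (x + real i * t + t) - e (x + real i * t))"
    by (rule diff_eq_sum_steps)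
  also have "\<dots> = (\<Sum>i<m. \<Sum>j<m. delta2 t g (x + real (i + j) * t))"
    unfolding e sum_subtractf[symmetric]
    by (intro sum.cong refl) (simp add: delta2_def algebra_simps)
  finally show ?thesis .
qed

lemma L1norm_delta2_dilate_le:
  fixes g :: "real \<Rightarrow> real"
  assumes [measurable]: "g \<in> borel_measurable borel"
  shows "L1norm (delta2 (real m * t) g) \<le> of_nat (m * m) * L1norm (delta2 t g)"
proof -
  have "L1norm (delta2 (real m * t) g)
      \<le> (\<integral>\<^sup>+x. (\<Sum>i<m. \<Sum>j<m. ennreal \<bar>delta2 t g (x + real (i + j) * t)\<bar>) \<partial>lborel)"
    unfolding L1norm_def delta2_dilate
  proof (intro nn_integral_mono)
    fix x
    have "\<bar>\<Sum>i<m. \<Sum>j<m. delta2 t g (x + real (i + j) * t)\<bar>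
        \<le> (\<Sum>i<m. \<Sum>j<m. \<bar>delta2 t g (x + real (i + j) * t)\<bar>)"
      by (rule order_trans[OF sum_abs]) (intro sum_mono sum_abs)
    then show "ennreal \<bar>\<Sum>i<m. \<Sum>j<m. delta2 t g (x + real (i + j) * t)\<bar>
        \<le> (\<Sum>i<m. \<Sum>j<m. ennreal \<bar>delta2 t g (x + real (i + j) * t)\<bar>)"
      by (simp add: sum_nonneg)
  qed
  also have "\<dots> = (\<Sum>i<m. \<integral>\<^sup>+x. (\<Sum>j<m. ennreal \<bar>delta2 t g (x + real (i + j) * t)\<bar>) \<partial>lborel)"
    by (rule nn_integral_sum) measurable
  also have "\<dots> = (\<Sum>i<m. \<Sum>j<m. \<integral>\<^sup>+x. ennreal \<bar>delta2 t g (x + real (i + j) * t)\<bar> \<partial>lborel)"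
    by (intro sum.cong refl nn_integral_sum) measurable
  also have "\<dots> = of_nat (m * m) * L1norm (delta2 t g)"
    by (simp add: L1norm_translate mult.assoc)
  finally show ?thesis .
qed

text \<open>Write \<open>y = m t\<close> with \<open>m = \<lfloor>|y|/\<xi>\<rfloor> + 1\<close>, so that \<open>|t| \<le> \<xi>\<close> and \<open>m \<le> 1 + |y|/\<xi>\<close>.\<close>
lemma L1norm_delta2_le_omega2:
  fixes g :: "real \<Rightarrow> real"
  assumes [measurable]: "g \<in> borel_measurable borel" and \<xi>: "\<xi> > 0"
  shows "L1norm (delta2 y g) \<le> ennreal ((1 + \<bar>y\<bar> / \<xi>) ^ 2) * omega2 g \<xi>"
proof -
  define m where "m = nat \<lfloor>\<bar>y\<bar> / \<xi>\<rfloor> + 1"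
  have m_gt: "real m > \<bar>y\<bar> / \<xi>" and m_le: "real m \<le> 1 + \<bar>y\<bar> / \<xi>"
    unfolding m_def using \<xi> by (simp_all add: of_nat_nat) linarith
  define t where "t = y / real m"
  have y_eq: "y = real m * t" unfolding t_def m_def by simp
  have t_le: "\<bar>t\<bar> \<le> \<xi>"
  proof -
    have "real m > 0" unfolding m_def by simp
    then show ?thesis unfolding t_def using m_gt \<xi> by (simp add: abs_div field_simps)
  qed
  have "L1norm (delta2 y g) \<le> of_nat (m * m) * L1norm (delta2 t g)"
    unfolding y_eq by (rule L1norm_delta2_dilate_le) measurable
  also have "\<dots> \<le> of_nat (m * m) * omega2 g \<xi>"
    unfolding omega2_def using t_le by (intro mult_left_mono SUP_upper) auto
  also have "\<dots> \<le> ennreal ((1 + \<bar>y\<bar> / \<xi>) ^ 2) * omega2 g \<xi>"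
    using m_le by (intro mult_right_mono) (auto simp: ennreal_of_nat_eq_real_of_nat power2_eq_square
                                                 intro!: ennreal_leI mult_mono)
  finally show ?thesis .
qed

section \<open>Even kernels\<close>

lemma integrable_translate_mult_bounded:
  fixes f k :: "real \<Rightarrow> real"
  assumes f: "integrable lborel f" and [measurable]: "k \<in> borel_measurable borel"
    and k_bound: "\<And>y. \<bar>k y\<bar> \<le> B"
  shows "integrable lborel (\<lambda>y. f (x + y) * k y)"
proof (rule Bochner_Integration.integrable_bound)
  show "integrable lborel (\<lambda>y. \<bar>f (x + 1 * y)\<bar> * B)"
    using lborel_integrable_real_affine[OF f, of 1 x] by (intro integrable_mult_left integrable_abs) auto
  show "AE y in lborel. norm (f (x + y) * k y) \<le> norm (\<bar>f (x + 1 * y)\<bar> * B)"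
  proof (intro AE_I2)
    fix y
    have "\<bar>k y\<bar> \<le> \<bar>B\<bar>" using k_bound[of y] by linarith
    then show "norm (f (x + y) * k y) \<le> norm (\<bar>f (x + 1 * y)\<bar> * B)"
      by (simp add: abs_mult mult_left_mono)
  qed
qed (use f in measurable)

text \<open>Averaging the operator with its reflection \<open>y \<mapsto> -y\<close>, which leaves it unchanged for an even
  kernel, produces the second difference.\<close>
lemma even_kernel_minus_id_eq:
  fixes f k :: "real \<Rightarrow> real"
  assumes f: "integrable lborel f" and [measurable]: "k \<in> borel_measurable borel"
    and k_bound: "\<And>y. \<bar>k y\<bar> \<le> B" and k_even: "\<And>y. k (- y) = k y"
    and k_int: "integrable lborel k" and k_one: "(LINT y|lborel. k y) = 1"
  shows "(LINT y|lborel. f (x + y) * k y) - f x = (LINT y|lborel. delta2 y f (x - y) * k y) / 2"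
proof -
  have int_plus: "integrable lborel (\<lambda>y. f (x + y) * k y)"
    by (rule integrable_translate_mult_bounded[OF f _ k_bound]) measurable
  have reflect: "(LINT y|lborel. g (- y)) = (LINT y|lborel. g y)" for g :: "real \<Rightarrow> real"
    using lborel_integral_real_affine[where f=g and c="-1" and t=0] by simp
  have int_minus: "integrable lborel (\<lambda>y. f (x - y) * k y)"
    using lborel_integrable_real_affine[OF int_plus, of "-1" 0] k_even by simp
  have minus_eq: "(LINT y|lborel. f (x - y) * k y) = (LINT y|lborel. f (x + y) * k y)"
    using reflect[of "\<lambda>y. f (x + y) * k y"] k_even by simp
  have "(LINT y|lborel. delta2 y f (x - y) * k y)
      = (LINT y|lborel. f (x + y) * k y - 2 * f x * k y + f (x - y) * k y)"
    by (simp add: delta2_def algebra_simps)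
  also have "\<dots> = 2 * (LINT y|lborel. f (x + y) * k y) - 2 * f x"
    using int_plus int_minus k_int k_one minus_eq by simp
  finally show ?thesis by simp
qed

lemma L1norm_even_kernel_minus_id_le:
  fixes f k :: "real \<Rightarrow> real"
  assumes f: "integrable lborel f" and k_meas [measurable]: "k \<in> borel_measurable borel"
    and k_nonneg: "\<And>y. k y \<ge> 0" and k_bound: "\<And>y. k y \<le> B" and k_even: "\<And>y. k (- y) = k y"
    and k_int: "integrable lborel k" and k_one: "(LINT y|lborel. k y) = 1"
  shows "L1norm (\<lambda>x. (LINT y|lborel. f (x + y) * k y) - f x)
         \<le> ennreal (1 / 2) * (\<integral>\<^sup>+y. ennreal (k y) * L1norm (delta2 y f) \<partial>lborel)"
proof -
  have [measurable]: "f \<in> borel_measurable borel"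
    using borel_measurable_integrable[OF f] by simp
  have k_abs: "\<bar>k y\<bar> \<le> B" for y using k_nonneg k_bound by simp
  define \<Phi> where "\<Phi> x y = ennreal (\<bar>delta2 y f (x - y)\<bar> * k y)" for x y
  have [measurable]: "case_prod \<Phi> \<in> borel_measurable (lborel \<Otimes>\<^sub>M lborel)"
    unfolding \<Phi>_def delta2_def by measurable
  have pointwise: "ennreal \<bar>(LINT y|lborel. f (x + y) * k y) - f x\<bar>
                   \<le> ennreal (1 / 2) * (\<integral>\<^sup>+y. \<Phi> x y \<partial>lborel)" for x
  proof -
    let ?g = "\<lambda>y. delta2 y f (x - y) * k y"
    have "norm (LINT y|lborel. ?g y) \<le> (\<integral>\<^sup>+y. ennreal (norm (?g y)) \<partial>lborel)"
      using integral_norm_bound_ennreal[of lborel ?g]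
      by (cases "integrable lborel ?g") (auto simp: not_integrable_integral_eq)
    then have "ennreal (1 / 2) * ennreal \<bar>LINT y|lborel. ?g y\<bar> \<le> ennreal (1 / 2) * (\<integral>\<^sup>+y. \<Phi> x y \<partial>lborel)"
      unfolding \<Phi>_def using k_nonneg by (intro mult_left_mono) (auto simp: abs_mult)
    moreover have "\<bar>(LINT y|lborel. f (x + y) * k y) - f x\<bar> = 1 / 2 * \<bar>LINT y|lborel. ?g y\<bar>"
      by (subst even_kernel_minus_id_eq[OF f k_meas k_abs k_even k_int k_one]) simp
    then have "ennreal \<bar>(LINT y|lborel. f (x + y) * k y) - f x\<bar> = ennreal (1 / 2) * ennreal \<bar>LINT y|lborel. ?g y\<bar>"
      by (subst ennreal_mult'[symmetric]) simp_all
    ultimately show ?thesis by simp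
  qed
  have inner: "(\<integral>\<^sup>+x. \<Phi> x y \<partial>lborel) = ennreal (k y) * L1norm (delta2 y f)" for y
  proof -
    have "(\<integral>\<^sup>+x. \<Phi> x y \<partial>lborel) = (\<integral>\<^sup>+x. ennreal (k y) * ennreal \<bar>delta2 y f (x + - y)\<bar> \<partial>lborel)"
      unfolding \<Phi>_def using k_nonneg by (intro nn_integral_cong) (simp add: ennreal_mult'[symmetric] mult.commute)
    also have "\<dots> = ennreal (k y) * (\<integral>\<^sup>+x. ennreal \<bar>delta2 y f (x + - y)\<bar> \<partial>lborel)"
      by (rule nn_integral_cmult) measurable
    also have "\<dots> = ennreal (k y) * L1norm (delta2 y f)"
      using L1norm_translate[OF delta2_measurable, of f y "- y"] by simp
    finally show ?thesis .
  qed
  have "L1norm (\<lambda>x. (LINT y|lborel. f (x + y) * k y) - f x)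
      \<le> (\<integral>\<^sup>+x. ennreal (1 / 2) * (\<integral>\<^sup>+y. \<Phi> x y \<partial>lborel) \<partial>lborel)"
    unfolding L1norm_def by (intro nn_integral_mono pointwise)
  also have "\<dots> = ennreal (1 / 2) * (\<integral>\<^sup>+x. \<integral>\<^sup>+y. \<Phi> x y \<partial>lborel \<partial>lborel)"
    by (rule nn_integral_cmult) measurable
  also have "(\<integral>\<^sup>+x. \<integral>\<^sup>+y. \<Phi> x y \<partial>lborel \<partial>lborel) = (\<integral>\<^sup>+y. \<integral>\<^sup>+x. \<Phi> x y \<partial>lborel \<partial>lborel)"
    by (rule lborel_pair.Fubini'[symmetric]) measurable
  finally show ?thesis by (simp add: inner)
qed

section \<open>The kernel of \<open>M_op\<close>\<close>

definition M_kernel :: "nat \<Rightarrow> real \<Rightarrow> real \<Rightarrow> real \<Rightarrow> real" where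
  "M_kernel \<alpha> \<beta> \<xi> y = W_const \<alpha> \<beta> \<xi> * (y ^ (2 * \<alpha>) + \<xi> ^ (2 * \<alpha>)) powr (- \<beta>)"

text \<open>\<open>\<xi>\<^sup>j M_moment_ratio \<alpha> \<beta> j\<close> is the \<open>j\<close>-th absolute moment of \<open>M_kernel \<alpha> \<beta> \<xi>\<close>.\<close>
definition M_moment_ratio :: "nat \<Rightarrow> real \<Rightarrow> nat \<Rightarrow> real" where
  "M_moment_ratio \<alpha> \<beta> j =
     Gamma ((real j + 1) / (2 * real \<alpha>)) * Gamma (\<beta> - (real j + 1) / (2 * real \<alpha>))
     / (Gamma (1 / (2 * real \<alpha>)) * Gamma (\<beta> - 1 / (2 * real \<alpha>)))"

lemma M_op_eq_kernel:
  assumes "\<xi> > 0"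
  shows "M_op \<alpha> \<beta> \<xi> f x = (LINT y|lborel. f (x + y) * M_kernel \<alpha> \<beta> \<xi> y)"
proof -
  have "f (x + y) * M_kernel \<alpha> \<beta> \<xi> y
      = W_const \<alpha> \<beta> \<xi> * (f (x + y) / (y ^ (2 * \<alpha>) + \<xi> ^ (2 * \<alpha>)) powr \<beta>)" for y
    by (simp add: M_kernel_def powr_minus_divide)
  then show ?thesis by (simp only: M_op_def integral_mult_right_zero)
qed

lemma M_moment_ratio_pos:
  assumes "\<alpha> \<ge> 1" and "(real j + 1) / (2 * real \<alpha>) < \<beta>"
  shows "M_moment_ratio \<alpha> \<beta> j > 0"
proof -
  have "1 / (2 * real \<alpha>) \<le> (real j + 1) / (2 * real \<alpha>)"
    using assms(1) by (intro divide_right_mono) auto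
  then show ?thesis
    using assms unfolding M_moment_ratio_def by (auto intro!: divide_pos_pos mult_pos_pos Gamma_real_pos)
qed

lemma M_moment_ratio_0:
  assumes "\<alpha> \<ge> 1" and "1 / (2 * real \<alpha>) < \<beta>"
  shows "M_moment_ratio \<alpha> \<beta> 0 = 1"
proof -
  have "Gamma (1 / (2 * real \<alpha>)) > 0" "Gamma (\<beta> - 1 / (2 * real \<alpha>)) > 0"
    using assms by (auto intro!: Gamma_real_pos)
  then show ?thesis unfolding M_moment_ratio_def by simp
qed

lemma W_const_pos:
  assumes "\<alpha> \<ge> 1" and "1 / (2 * real \<alpha>) < \<beta>" and "\<xi> > 0"
  shows "W_const \<alpha> \<beta> \<xi> > 0"
proof -
  have "0 < 1 / (2 * real \<alpha>)" using assms(1) by simp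
  moreover from this have "0 < \<beta>" using assms(2) by linarith
  ultimately show ?thesis
    using assms unfolding W_const_def by (auto intro!: divide_pos_pos mult_pos_pos Gamma_real_pos)
qed

lemma M_kernel_measurable [measurable]: "M_kernel \<alpha> \<beta> \<xi> \<in> borel_measurable borel"
  unfolding M_kernel_def by measurable

lemma M_kernel_nonneg: "W_const \<alpha> \<beta> \<xi> \<ge> 0 \<Longrightarrow> M_kernel \<alpha> \<beta> \<xi> y \<ge> 0"
  unfolding M_kernel_def by simp

lemma M_kernel_even: "M_kernel \<alpha> \<beta> \<xi> (- y) = M_kernel \<alpha> \<beta> \<xi> y"
  unfolding M_kernel_def by simp

lemma M_kernel_le:
  assumes "W_const \<alpha> \<beta> \<xi> \<ge> 0" and "\<beta> \<ge> 0" and "\<xi> > 0"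
  shows "M_kernel \<alpha> \<beta> \<xi> y \<le> W_const \<alpha> \<beta> \<xi> * (\<xi> ^ (2 * \<alpha>)) powr (- \<beta>)"
  unfolding M_kernel_def using assms
  by (auto intro!: mult_left_mono powr_mono2' simp: zero_le_even_power)

lemma nn_integral_M_kernel_moment:
  assumes \<alpha>: "\<alpha> \<ge> 1" and \<xi>: "\<xi> > 0" and \<beta>: "(real j + 1) / (2 * real \<alpha>) < \<beta>"
  shows "(\<integral>\<^sup>+y. ennreal (\<bar>y\<bar> ^ j * M_kernel \<alpha> \<beta> \<xi> y) \<partial>lborel) = ennreal (\<xi> ^ j * M_moment_ratio \<alpha> \<beta> j)"
proof -
  define a where "a = (real j + 1) / (2 * real \<alpha>)"
  define m where "m = 2 * Gamma a * Gamma (\<beta> - a) * (\<xi> ^ (2 * \<alpha>)) powr (a - \<beta>) / Gamma \<beta> / (2 * real \<alpha>)"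
  have "0 < a" using \<alpha> by (simp add: a_def)
  then have \<Gamma>\<beta>: "Gamma \<beta> > 0" using \<beta> by (simp add: a_def Gamma_real_pos)
  have "1 / (2 * real \<alpha>) \<le> a" unfolding a_def by (intro divide_right_mono) auto
  then have W: "W_const \<alpha> \<beta> \<xi> \<ge> 0" using W_const_pos[OF \<alpha> _ \<xi>] \<beta> by (simp add: a_def less_imp_le)
  have moment: "(\<integral>\<^sup>+y. ennreal (\<bar>y\<bar> ^ j * (y ^ (2 * \<alpha>) + \<xi> ^ (2 * \<alpha>)) powr (- \<beta>)) \<partial>lborel) = ennreal m"
    using nn_integral_moment_even_power[where n="2 * \<alpha>" and k=j and c="\<xi> ^ (2 * \<alpha>)" and b=\<beta>] \<alpha> \<xi> \<beta>
    by (simp add: a_def m_def add.commute)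
  have \<xi>_powers: "(\<xi> ^ (2 * \<alpha>)) powr (a - \<beta>) * \<xi> powr (2 * real \<alpha> * \<beta> - 1) = \<xi> ^ j"
  proof -
    have "(\<xi> ^ (2 * \<alpha>)) powr (a - \<beta>) = \<xi> powr (2 * real \<alpha> * (a - \<beta>))"
      using \<xi> by (simp add: powr_realpow[symmetric] powr_powr)
    also have "2 * real \<alpha> * (a - \<beta>) = real j + 1 - 2 * real \<alpha> * \<beta>"
      using \<alpha> by (simp add: a_def field_simps)
    finally show ?thesis using \<xi> by (simp add: powr_add[symmetric] powr_realpow)
  qed
  have "W_const \<alpha> \<beta> \<xi> * m
      = ((\<xi> ^ (2 * \<alpha>)) powr (a - \<beta>) * \<xi> powr (2 * real \<alpha> * \<beta> - 1)) *
        (Gamma a * Gamma (\<beta> - a) / (Gamma (1 / (2 * real \<alpha>)) * Gamma (\<beta> - 1 / (2 * real \<alpha>))))"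
    unfolding W_const_def m_def using \<Gamma>\<beta> \<alpha> by (simp add: field_simps)
  also have "\<dots> = \<xi> ^ j * M_moment_ratio \<alpha> \<beta> j"
    unfolding \<xi>_powers by (simp add: M_moment_ratio_def a_def)
  finally have scale: "W_const \<alpha> \<beta> \<xi> * m = \<xi> ^ j * M_moment_ratio \<alpha> \<beta> j" .
  have "(\<integral>\<^sup>+y. ennreal (\<bar>y\<bar> ^ j * M_kernel \<alpha> \<beta> \<xi> y) \<partial>lborel)
      = (\<integral>\<^sup>+y. ennreal (W_const \<alpha> \<beta> \<xi>) * ennreal (\<bar>y\<bar> ^ j * (y ^ (2 * \<alpha>) + \<xi> ^ (2 * \<alpha>)) powr (- \<beta>)) \<partial>lborel)"
    unfolding M_kernel_def using W by (intro nn_integral_cong) (simp add: ennreal_mult'[symmetric] mult_ac)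
  also have "\<dots> = ennreal (W_const \<alpha> \<beta> \<xi>) * ennreal m"
    unfolding moment[symmetric] by (rule nn_integral_cmult) measurable
  also have "\<dots> = ennreal (W_const \<alpha> \<beta> \<xi> * m)"
    using W by (simp add: ennreal_mult')
  finally show ?thesis unfolding scale .
qed

lemma has_bochner_integral_M_kernel:
  assumes \<alpha>: "\<alpha> \<ge> 1" and \<beta>: "1 / (2 * real \<alpha>) < \<beta>" and \<xi>: "\<xi> > 0"
  shows "has_bochner_integral lborel (M_kernel \<alpha> \<beta> \<xi>) 1"
proof (rule has_bochner_integral_nn_integral)
  show "(\<integral>\<^sup>+y. ennreal (M_kernel \<alpha> \<beta> \<xi> y) \<partial>lborel) = ennreal 1"
    using nn_integral_M_kernel_moment[OF \<alpha> \<xi>, of 0] M_moment_ratio_0[OF \<alpha> \<beta>] \<beta> by simp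
  show "AE y in lborel. 0 \<le> M_kernel \<alpha> \<beta> \<xi> y"
    using W_const_pos[OF \<alpha> \<beta> \<xi>] by (simp add: M_kernel_nonneg)
qed simp_all

lemma nn_integral_M_kernel_weight:
  assumes \<alpha>: "\<alpha> \<ge> 1" and \<beta>: "3 / (2 * real \<alpha>) < \<beta>" and \<xi>: "\<xi> > 0"
  shows "(\<integral>\<^sup>+y. ennreal (M_kernel \<alpha> \<beta> \<xi> y * (1 + \<bar>y\<bar> / \<xi>) ^ 2) \<partial>lborel)
         = ennreal (1 + 2 * M_moment_ratio \<alpha> \<beta> 1 + M_moment_ratio \<alpha> \<beta> 2)"
proof -
  let ?k = "M_kernel \<alpha> \<beta> \<xi>" and ?R = "M_moment_ratio \<alpha> \<beta>"
  have \<beta>_gt: "(real j + 1) / (2 * real \<alpha>) < \<beta>" if "j \<le> 2" for j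
  proof -
    have "(real j + 1) / (2 * real \<alpha>) \<le> 3 / (2 * real \<alpha>)"
      using that \<alpha> by (intro divide_right_mono) auto
    then show ?thesis using \<beta> by linarith
  qed
  have \<beta>1: "1 / (2 * real \<alpha>) < \<beta>" using \<beta>_gt[of 0] by simp
  have k_nonneg: "?k y \<ge> 0" for y
    using W_const_pos[OF \<alpha> \<beta>1 \<xi>] by (simp add: M_kernel_nonneg)
  have R_nonneg: "?R j \<ge> 0" if "j \<le> 2" for j
    using M_moment_ratio_pos[OF \<alpha> \<beta>_gt[OF that]] by simp
  have moment: "(\<integral>\<^sup>+y. ennreal (\<bar>y\<bar> ^ j * ?k y) \<partial>lborel) = ennreal (\<xi> ^ j * ?R j)" if "j \<le> 2" for j
    by (rule nn_integral_M_kernel_moment[OF \<alpha> \<xi> \<beta>_gt[OF that]])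
  have "(\<integral>\<^sup>+y. ennreal (?k y * (1 + \<bar>y\<bar> / \<xi>) ^ 2) \<partial>lborel)
      = (\<integral>\<^sup>+y. ennreal (\<bar>y\<bar> ^ 0 * ?k y) + (ennreal (2 / \<xi>) * ennreal (\<bar>y\<bar> ^ 1 * ?k y)
                + ennreal (1 / \<xi>\<^sup>2) * ennreal (\<bar>y\<bar> ^ 2 * ?k y)) \<partial>lborel)"
  proof (intro nn_integral_cong)
    fix y
    have "?k y * (1 + \<bar>y\<bar> / \<xi>) ^ 2
        = \<bar>y\<bar> ^ 0 * ?k y + (2 / \<xi> * (\<bar>y\<bar> ^ 1 * ?k y) + 1 / \<xi>\<^sup>2 * (\<bar>y\<bar> ^ 2 * ?k y))"
      using \<xi> by (simp add: power2_eq_square field_simps)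
    then show "ennreal (?k y * (1 + \<bar>y\<bar> / \<xi>) ^ 2) = ennreal (\<bar>y\<bar> ^ 0 * ?k y)
        + (ennreal (2 / \<xi>) * ennreal (\<bar>y\<bar> ^ 1 * ?k y) + ennreal (1 / \<xi>\<^sup>2) * ennreal (\<bar>y\<bar> ^ 2 * ?k y))"
      using \<xi> k_nonneg[of y] by (simp add: ennreal_plus[symmetric] ennreal_mult[symmetric] del: ennreal_plus)
  qed
  also have "\<dots> = ennreal (?R 0) + (ennreal (2 / \<xi>) * ennreal (\<xi> * ?R 1) + ennreal (1 / \<xi>\<^sup>2) * ennreal (\<xi>\<^sup>2 * ?R 2))"
    using moment[of 0] moment[of 1] moment[of 2]
    by (simp add: nn_integral_add nn_integral_cmult M_kernel_def del: power_one_right)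
  also have "\<dots> = ennreal (?R 0 + 2 * ?R 1 + ?R 2)"
    using \<xi> R_nonneg[of 0] R_nonneg[of 1] R_nonneg[of 2]
    by (simp add: ennreal_plus[symmetric] ennreal_mult[symmetric] del: ennreal_plus)
  also have "?R 0 = 1" by (rule M_moment_ratio_0[OF \<alpha> \<beta>1])
  finally show ?thesis .
qed

lemma L1norm_M_op_minus_id_le:
  fixes f :: "real \<Rightarrow> real"
  assumes \<alpha>: "\<alpha> \<ge> 1" and \<beta>: "3 / (2 * real \<alpha>) < \<beta>" and f: "integrable lborel f" and \<xi>: "\<xi> > 0"
  shows "L1norm (\<lambda>x. M_op \<alpha> \<beta> \<xi> f x - f x)
         \<le> ennreal (1 / 2 + M_moment_ratio \<alpha> \<beta> 1 + M_moment_ratio \<alpha> \<beta> 2 / 2) * omega2 f \<xi>"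
proof -
  let ?k = "M_kernel \<alpha> \<beta> \<xi>"
  have "0 \<le> 1 / (2 * real \<alpha>)" and "1 / (2 * real \<alpha>) \<le> 3 / (2 * real \<alpha>)"
    by (auto intro: divide_right_mono)
  then have \<beta>1: "1 / (2 * real \<alpha>) < \<beta>" and \<beta>_nonneg: "\<beta> \<ge> 0"
    using \<beta> by linarith+
  have W: "W_const \<alpha> \<beta> \<xi> \<ge> 0" using W_const_pos[OF \<alpha> \<beta>1 \<xi>] by simp
  have [measurable]: "f \<in> borel_measurable borel"
    using borel_measurable_integrable[OF f] by simp
  have "L1norm (\<lambda>x. M_op \<alpha> \<beta> \<xi> f x - f x) = L1norm (\<lambda>x. (LINT y|lborel. f (x + y) * ?k y) - f x)"
    using \<xi> by (simp add: M_op_eq_kernel)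
  also have "\<dots> \<le> ennreal (1 / 2) * (\<integral>\<^sup>+y. ennreal (?k y) * L1norm (delta2 y f) \<partial>lborel)"
    using has_bochner_integral_M_kernel[OF \<alpha> \<beta>1 \<xi>] M_kernel_le[OF W \<beta>_nonneg \<xi>] W
    by (intro L1norm_even_kernel_minus_id_le[OF f, where B="W_const \<alpha> \<beta> \<xi> * (\<xi> ^ (2 * \<alpha>)) powr - \<beta>"])
       (auto simp: has_bochner_integral_iff M_kernel_nonneg M_kernel_even)
  also have "\<dots> \<le> ennreal (1 / 2) * (\<integral>\<^sup>+y. ennreal (?k y * (1 + \<bar>y\<bar> / \<xi>) ^ 2) * omega2 f \<xi> \<partial>lborel)"
  proof (intro mult_left_mono nn_integral_mono)
    fix y
    have "ennreal (?k y) * L1norm (delta2 y f) \<le> ennreal (?k y) * (ennreal ((1 + \<bar>y\<bar> / \<xi>) ^ 2) * omega2 f \<xi>)"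
      by (intro mult_left_mono L1norm_delta2_le_omega2 \<xi>) simp_all
    then show "ennreal (?k y) * L1norm (delta2 y f) \<le> ennreal (?k y * (1 + \<bar>y\<bar> / \<xi>) ^ 2) * omega2 f \<xi>"
      using M_kernel_nonneg[OF W] by (simp add: ennreal_mult' mult.assoc)
  qed simp
  also have "(\<integral>\<^sup>+y. ennreal (?k y * (1 + \<bar>y\<bar> / \<xi>) ^ 2) * omega2 f \<xi> \<partial>lborel)
      = (\<integral>\<^sup>+y. ennreal (?k y * (1 + \<bar>y\<bar> / \<xi>) ^ 2) \<partial>lborel) * omega2 f \<xi>"
    by (rule nn_integral_multc) measurable
  also have "(\<integral>\<^sup>+y. ennreal (?k y * (1 + \<bar>y\<bar> / \<xi>) ^ 2) \<partial>lborel)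
      = ennreal (1 + 2 * M_moment_ratio \<alpha> \<beta> 1 + M_moment_ratio \<alpha> \<beta> 2)"
    by (rule nn_integral_M_kernel_weight[OF \<alpha> \<beta> \<xi>])
  also have "ennreal (1 / 2) * (ennreal (1 + 2 * M_moment_ratio \<alpha> \<beta> 1 + M_moment_ratio \<alpha> \<beta> 2) * omega2 f \<xi>)
      = ennreal (1 / 2 * (1 + 2 * M_moment_ratio \<alpha> \<beta> 1 + M_moment_ratio \<alpha> \<beta> 2)) * omega2 f \<xi>"
    by (subst ennreal_mult') (simp_all add: mult.assoc)
  also have "1 / 2 * (1 + 2 * M_moment_ratio \<alpha> \<beta> 1 + M_moment_ratio \<alpha> \<beta> 2)
      = 1 / 2 + M_moment_ratio \<alpha> \<beta> 1 + M_moment_ratio \<alpha> \<beta> 2 / 2"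
    by (simp add: field_simps)
  finally show ?thesis .
qed

section \<open>Continuity of translation\<close>

lemma integrable_tail_small:
  fixes f :: "real \<Rightarrow> real"
  assumes f: "integrable lborel f" and e: "e > 0"
  shows "\<exists>N::nat. (\<integral>\<^sup>+x. ennreal (if real N \<le> \<bar>x\<bar> then \<bar>f x\<bar> else 0) \<partial>lborel) \<le> ennreal e"
proof -
  define s where "s i x = (if real i \<le> \<bar>x\<bar> then \<bar>f x\<bar> else 0)" for i :: nat and x
  have [measurable]: "s i \<in> borel_measurable lborel" for i
    unfolding s_def using f by measurable
  have lim: "AE x in lborel. (\<lambda>i. s i x) \<longlonglongrightarrow> 0"
  proof (intro AE_I2 tendsto_eventually)
    fix x :: real
    obtain N :: nat where "\<bar>x\<bar> < real N" using reals_Archimedean2 by blast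
    then show "\<forall>\<^sub>F i in sequentially. s i x = 0"
      unfolding s_def eventually_sequentially by (intro exI[of _ N]) auto
  qed
  have bound: "AE x in lborel. norm (s i x) \<le> \<bar>f x\<bar>" for i
    unfolding s_def by auto
  have "(\<lambda>i. LINT x|lborel. s i x) \<longlonglongrightarrow> 0"
    using integral_dominated_convergence[OF _ _ integrable_abs[OF f] lim bound] by simp
  then obtain N where "\<bar>LINT x|lborel. s N x\<bar> < e"
    using e by (auto dest!: LIMSEQ_D)
  moreover have "integrable lborel (s N)"
    using integrable_dominated_convergence2[OF _ _ integrable_abs[OF f] lim bound] by simp
  then have "(\<integral>\<^sup>+x. ennreal (s N x) \<partial>lborel) = ennreal (LINT x|lborel. s N x)"
    by (rule nn_integral_eq_integral) (auto simp: s_def)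
  ultimately show ?thesis unfolding s_def by (intro exI[of _ N]) (auto intro: ennreal_leI)
qed

text \<open>Continuity of translation in \<open>L\<^sub>1\<close>: uniform continuity on a compact interval, and a small
  tail of \<open>|f|\<close> outside it.\<close>
lemma L1norm_translate_diff_small:
  fixes f :: "real \<Rightarrow> real"
  assumes cont: "continuous_on UNIV f" and f: "integrable lborel f" and e: "e > 0"
  shows "\<exists>d>0. \<forall>t. \<bar>t\<bar> < d \<longrightarrow> L1norm (\<lambda>x. f (x + t) - f x) \<le> ennreal e"
proof -
  have [measurable]: "f \<in> borel_measurable borel"
    using borel_measurable_integrable[OF f] by simp
  obtain N :: nat where N: "(\<integral>\<^sup>+x. ennreal (if real N \<le> \<bar>x\<bar> then \<bar>f x\<bar> else 0) \<partial>lborel) \<le> ennreal (e / 4)"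
    using integrable_tail_small[OF f, of "e / 4"] e by auto
  define R where "R = real N"
  define g where "g x = (if R \<le> \<bar>x\<bar> then \<bar>f x\<bar> else 0)" for x
  have [measurable]: "g \<in> borel_measurable borel" unfolding g_def by measurable
  have g_small: "(\<integral>\<^sup>+x. ennreal (g (x + t)) \<partial>lborel) \<le> ennreal (e / 4)" for t
    using N nn_integral_real_affine[of "\<lambda>x. ennreal (g x)" 1 t]
    by (simp add: g_def R_def add.commute)
  define \<eta> where "\<eta> = e / (4 * R + 4)"
  have \<eta>: "\<eta> > 0" unfolding \<eta>_def R_def using e by (simp add: add_pos_nonneg)
  have "uniformly_continuous_on {-R-2..R+2} f"
    by (rule compact_uniformly_continuous) (use cont continuous_on_subset in auto)
  then obtain d where d: "d > 0"
    and unif: "\<And>x x'. x \<in> {-R-2..R+2} \<Longrightarrow> x' \<in> {-R-2..R+2} \<Longrightarrow> dist x' x < d \<Longrightarrow> dist (f x') (f x) < \<eta>"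
    unfolding uniformly_continuous_on_def using \<eta> by metis
  show ?thesis
  proof (intro exI[of _ "min d 1"] conjI allI impI)
    fix t :: real assume t: "\<bar>t\<bar> < min d 1"
    have pointwise: "ennreal \<bar>f (x + t) - f x\<bar>
        \<le> ennreal \<eta> * indicator {-R-1..R+1} x + ennreal (g (x + t)) + ennreal (g x)" for x
    proof (cases "\<bar>x\<bar> \<le> R + 1")
      case True
      then have "x \<in> {-R-2..R+2}" "x + t \<in> {-R-2..R+2}" "dist (x + t) x < d"
        using t by (auto simp: dist_real_def)
      then have "\<bar>f (x + t) - f x\<bar> < \<eta>" using unif by (auto simp: dist_real_def)
      moreover have "x \<in> {-R-1..R+1}" using True by auto
      ultimately show ?thesis by (auto intro!: add_increasing2 ennreal_leI)
    next
      case False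
      then have "\<bar>f (x + t) - f x\<bar> \<le> g (x + t) + g x" using t unfolding g_def by auto
      then have "ennreal \<bar>f (x + t) - f x\<bar> \<le> ennreal (g (x + t)) + ennreal (g x)"
        by (simp add: g_def ennreal_plus[symmetric] del: ennreal_plus)
      then show ?thesis by (simp add: add.assoc add_increasing)
    qed
    have "L1norm (\<lambda>x. f (x + t) - f x)
        \<le> (\<integral>\<^sup>+x. ennreal \<eta> * indicator {-R-1..R+1} x + ennreal (g (x + t)) + ennreal (g x) \<partial>lborel)"
      unfolding L1norm_def by (intro nn_integral_mono pointwise)
    also have "\<dots> = ennreal \<eta> * ennreal (2 * R + 2) + (\<integral>\<^sup>+x. ennreal (g (x + t)) \<partial>lborel)
                      + (\<integral>\<^sup>+x. ennreal (g x) \<partial>lborel)"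
      by (simp add: nn_integral_add nn_integral_cmult_indicator R_def)
    also have "ennreal \<eta> * ennreal (2 * R + 2) = ennreal (e / 2)"
    proof -
      have "\<eta> * (2 * R + 2) = e / 2" unfolding \<eta>_def R_def by (simp add: field_simps)
      then show ?thesis using \<eta> by (metis ennreal_mult' less_imp_le)
    qed
    also have "ennreal (e / 2) + (\<integral>\<^sup>+x. ennreal (g (x + t)) \<partial>lborel) + (\<integral>\<^sup>+x. ennreal (g x) \<partial>lborel)
        \<le> ennreal (e / 2) + ennreal (e / 4) + ennreal (e / 4)"
      using g_small[of t] g_small[of 0] by (intro add_mono) simp_all
    also have "\<dots> = ennreal e" using e by (simp add: ennreal_plus[symmetric] del: ennreal_plus)
    finally show "L1norm (\<lambda>x. f (x + t) - f x) \<le> ennreal e" .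
  qed (use d in simp)
qed

lemma L1norm_delta2_le_translate:
  fixes f :: "real \<Rightarrow> real"
  assumes [measurable]: "f \<in> borel_measurable borel"
  shows "L1norm (delta2 t f) \<le> 2 * L1norm (\<lambda>x. f (x + t) - f x)"
proof -
  have "L1norm (delta2 t f)
      \<le> (\<integral>\<^sup>+x. ennreal \<bar>f (x + t + t) - f (x + t)\<bar> + ennreal \<bar>f (x + t) - f x\<bar> \<partial>lborel)"
    unfolding L1norm_def
  proof (intro nn_integral_mono)
    fix x
    have "\<bar>delta2 t f x\<bar> \<le> \<bar>f (x + t + t) - f (x + t)\<bar> + \<bar>f (x + t) - f x\<bar>"
      unfolding delta2_def by (simp add: algebra_simps)
    then show "ennreal \<bar>delta2 t f x\<bar> \<le> ennreal \<bar>f (x + t + t) - f (x + t)\<bar> + ennreal \<bar>f (x + t) - f x\<bar>"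
      by (simp add: ennreal_plus[symmetric] del: ennreal_plus)
  qed
  also have "\<dots> = (\<integral>\<^sup>+x. ennreal \<bar>f (x + t + t) - f (x + t)\<bar> \<partial>lborel)
                 + (\<integral>\<^sup>+x. ennreal \<bar>f (x + t) - f x\<bar> \<partial>lborel)"
    by (rule nn_integral_add) measurable
  also have "(\<integral>\<^sup>+x. ennreal \<bar>f (x + t + t) - f (x + t)\<bar> \<partial>lborel) = L1norm (\<lambda>x. f (x + t) - f x)"
    using L1norm_translate[of "\<lambda>x. f (x + t) - f x" t] by simp
  also have "L1norm (\<lambda>x. f (x + t) - f x) + (\<integral>\<^sup>+x. ennreal \<bar>f (x + t) - f x\<bar> \<partial>lborel)
      = 2 * L1norm (\<lambda>x. f (x + t) - f x)"
    by (simp add: L1norm_def mult_2)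
  finally show ?thesis .
qed

lemma omega2_tendsto_0:
  fixes f :: "real \<Rightarrow> real"
  assumes cont: "continuous_on UNIV f" and f: "integrable lborel f"
  shows "(omega2 f \<longlongrightarrow> 0) (at_right 0)"
proof (rule tendsto_zero_ennreal)
  fix r :: real assume r: "r > 0"
  obtain d where d: "d > 0" and small: "\<And>t. \<bar>t\<bar> < d \<Longrightarrow> L1norm (\<lambda>x. f (x + t) - f x) \<le> ennreal (r / 4)"
    using L1norm_translate_diff_small[OF cont f, of "r / 4"] r by auto
  have "omega2 f s \<le> ennreal (r / 2)" if "s < d" for s
    unfolding omega2_def
  proof (rule SUP_least)
    fix t assume "t \<in> {t. \<bar>t\<bar> \<le> s}"
    then have "\<bar>t\<bar> < d" using that by simp
    have "L1norm (delta2 t f) \<le> 2 * L1norm (\<lambda>x. f (x + t) - f x)"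
      using borel_measurable_integrable[OF f] by (intro L1norm_delta2_le_translate) simp
    also have "\<dots> \<le> 2 * ennreal (r / 4)" by (intro mult_left_mono small \<open>\<bar>t\<bar> < d\<close>) simp
    also have "\<dots> = ennreal (r / 2)" using ennreal_mult'[of 2 "r / 4"] by simp
    finally show "L1norm (delta2 t f) \<le> ennreal (r / 2)" .
  qed
  moreover have "ennreal (r / 2) < ennreal r" using r by (simp add: ennreal_less_iff)
  ultimately show "\<forall>\<^sub>F s in at_right 0. omega2 f s < ennreal r"
    using d unfolding eventually_at_right_field by (intro exI[of _ d]) (auto intro: le_less_trans)
qed

theorem proposition4:
  fixes \<alpha> :: nat and \<beta> \<xi> :: real and f :: "real \<Rightarrow> real"
  assumes "\<alpha> \<ge> 1"
    and "\<beta> > 3 / (2 * real \<alpha>)"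
    and "continuous_on UNIV f"
    and "integrable lborel f"
    and "\<xi> > 0"
  shows "L1norm (\<lambda>x. M_op \<alpha> \<beta> \<xi> f x - f x)
           \<le> ennreal (1/2
               + Gamma (1 / real \<alpha>) * Gamma (\<beta> - 1 / real \<alpha>)
                 / (Gamma (1 / (2 * real \<alpha>)) * Gamma (\<beta> - 1 / (2 * real \<alpha>)))
               + Gamma (3 / (2 * real \<alpha>)) * Gamma (\<beta> - 3 / (2 * real \<alpha>))
                 / (2 * Gamma (1 / (2 * real \<alpha>)) * Gamma (\<beta> - 1 / (2 * real \<alpha>))))
             * omega2 f \<xi>
         \<and> ((\<lambda>s. L1norm (\<lambda>x. M_op \<alpha> \<beta> s f x - f x)) \<longlongrightarrow> 0) (at_right 0)"
proof -
  let ?R = "M_moment_ratio \<alpha> \<beta>"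
  have "Gamma (1 / (2 * real \<alpha>)) > 0" and "Gamma (\<beta> - 1 / (2 * real \<alpha>)) > 0"
    using M_moment_ratio_pos[OF assms(1), of 0 \<beta>] assms(1,2)
    by (auto intro!: Gamma_real_pos simp: divide_simps)
  then have constant_eq: "1 / 2 + ?R 1 + ?R 2 / 2
      = 1/2
        + Gamma (1 / real \<alpha>) * Gamma (\<beta> - 1 / real \<alpha>)
          / (Gamma (1 / (2 * real \<alpha>)) * Gamma (\<beta> - 1 / (2 * real \<alpha>)))
        + Gamma (3 / (2 * real \<alpha>)) * Gamma (\<beta> - 3 / (2 * real \<alpha>))
          / (2 * Gamma (1 / (2 * real \<alpha>)) * Gamma (\<beta> - 1 / (2 * real \<alpha>)))"
    using assms(1) by (simp add: M_moment_ratio_def field_simps)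
  have bound: "L1norm (\<lambda>x. M_op \<alpha> \<beta> s f x - f x) \<le> ennreal (1 / 2 + ?R 1 + ?R 2 / 2) * omega2 f s"
    if "s > 0" for s
    using assms that by (intro L1norm_M_op_minus_id_le) auto
  have "((\<lambda>s. ennreal (1 / 2 + ?R 1 + ?R 2 / 2) * omega2 f s) \<longlongrightarrow> ennreal (1 / 2 + ?R 1 + ?R 2 / 2) * 0)
        (at_right 0)"
    using assms(3,4) by (intro ennreal_tendsto_cmult omega2_tendsto_0) simp_all
  then have "((\<lambda>s. L1norm (\<lambda>x. M_op \<alpha> \<beta> s f x - f x)) \<longlongrightarrow> 0) (at_right 0)"
    by (intro tendsto_sandwich[where f="\<lambda>_. 0", OF _ eventually_mono[OF eventually_at_right_less bound]])
       simp_all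
  then show ?thesis
    using bound[OF assms(5)] unfolding constant_eq by simp
qed

end
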